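(* There exists a strongly complete profinite group $Q$ (i.e. every subgroup of finite index in $Q$ is open) in which the derived subgroup $Q'$ is not closed.
   Context: $Q'$ denotes the abstract derived subgroup of $Q$, i.e. the subgroup generated algebraically by all commutators $[x,y]$, $x,y\in Q$. *)

theory Defs
  imports "HOL-Analysis.Analysis" "HOL-Algebra.Algebra"
begin

definition topological_group :: "('a, 'b) monoid_scheme \<Rightarrow> 'a topology \<Rightarrow> bool" where
  "topological_group G T \<longleftrightarrow>
     group G \<and> topspace T = carrier G \<and>
     continuous_map (prod_topology T T) T (\<lambda>(x, y). x \<otimes>\<^bsub>G\<^esub> y) \<and>
     continuous_map T T (\<lambda>x. inv\<^bsub>G\<^esub> x)"

definition totally_disconnected_space :: "'a topology \<Rightarrow> bool" where
  "totally_disconnected_space T \<longleftrightarrow>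
     (\<forall>S. S \<subseteq> topspace T \<and> connectedin T S \<longrightarrow> (\<exists>a. S \<subseteq> {a}))"

definition profinite_group :: "('a, 'b) monoid_scheme \<Rightarrow> 'a topology \<Rightarrow> bool" where
  "profinite_group G T \<longleftrightarrow>
     topological_group G T \<and> compact_space T \<and> Hausdorff_space T \<and>
     totally_disconnected_space T"

definition strongly_complete :: "('a, 'b) monoid_scheme \<Rightarrow> 'a topology \<Rightarrow> bool" where
  "strongly_complete G T \<longleftrightarrow>
     (\<forall>H. subgroup H G \<and> finite (rcosets\<^bsub>G\<^esub> H) \<longrightarrow> openin T H)"

end

theory Submission
  imports Defs "HOL-Number_Theory.Number_Theory"
begin

text \<open>
  The group is the product, over all primes \<open>p\<close>, of the finite groups \<open>H\<^sub>p\<close> of triples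
  \<open>(x, y, z)\<close> with \<open>x, y \<in> \<int>\<^sub>p\<^sup>p\<close> and \<open>z\<close> a \<open>p \<times> p\<close> matrix over \<open>\<int>\<^sub>p\<close>, multiplied by
  \<open>(x, y, z) (x', y', z') = (x + x', y + y', z + z' + x y'\<^sup>T)\<close>.

  Every element of \<open>H\<^sub>p\<close> has order dividing \<open>p\<^sup>2\<close>. A subgroup of index \<open>N\<close> contains all
  \<open>N!\<close>-th powers, and the \<open>N!\<close>-th power map is onto \<open>H\<^sub>p\<close> for \<open>p > N\<close>; so the subgroup
  contains the kernel of the projection onto finitely many factors and is open.

  A commutator in \<open>H\<^sub>p\<close> is central and depends only on the \<open>x\<close>- and \<open>y\<close>-coordinates of its
  arguments, so at most \<open>p\<^bsup>4pk\<^esup>\<close> elements are products of \<open>k\<close> commutators, while all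
  \<open>p\<^bsup>p\<^sup>2\<^esup>\<close> central elements lie in \<open>H\<^sub>p'\<close>. An element whose \<open>p\<close>-th coordinate is
  a central element of \<open>H\<^sub>p'\<close> that is not a product of \<open>(p - 1) div 4\<close> commutators lies
  in the closure of the derived subgroup (its finite truncations are in it) but not in the
  derived subgroup itself, whose elements are products of boundedly many commutators.
\<close>

section \<open>Products of commutators\<close>

definition commutators :: "('a, 'b) monoid_scheme \<Rightarrow> 'a set" where
  "commutators G = derived_set G (carrier G)"

primrec commutator_products :: "('a, 'b) monoid_scheme \<Rightarrow> nat \<Rightarrow> 'a set" where
  "commutator_products G 0 = {\<one>\<^bsub>G\<^esub>}"
| "commutator_products G (Suc k) =
     {c \<otimes>\<^bsub>G\<^esub> g | c g. c \<in> commutators G \<and> g \<in> commutator_products G k}"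

lemma commutatorsI:
  "a \<in> carrier G \<Longrightarrow> b \<in> carrier G
    \<Longrightarrow> a \<otimes>\<^bsub>G\<^esub> b \<otimes>\<^bsub>G\<^esub> inv\<^bsub>G\<^esub> a \<otimes>\<^bsub>G\<^esub> inv\<^bsub>G\<^esub> b \<in> commutators G"
  unfolding commutators_def by blast

lemma commutatorsE:
  assumes "c \<in> commutators G"
  obtains a b where "a \<in> carrier G" "b \<in> carrier G"
    "c = a \<otimes>\<^bsub>G\<^esub> b \<otimes>\<^bsub>G\<^esub> inv\<^bsub>G\<^esub> a \<otimes>\<^bsub>G\<^esub> inv\<^bsub>G\<^esub> b"
  using assms unfolding commutators_def by blast

lemma commutator_products_SucI:
  "c \<in> commutators G \<Longrightarrow> g \<in> commutator_products G k
    \<Longrightarrow> c \<otimes>\<^bsub>G\<^esub> g \<in> commutator_products G (Suc k)"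
  by auto

context group
begin

lemma commutators_subset_carrier: "commutators G \<subseteq> carrier G"
  unfolding commutators_def by (rule derived_set_in_carrier) simp

lemma derived_eq_generate_commutators: "derived G (carrier G) = generate G (commutators G)"
  by (simp add: derived_def commutators_def)

lemma commutator_products_subset_carrier: "commutator_products G k \<subseteq> carrier G"
  by (induction k) (use commutators_subset_carrier in auto)

lemma one_in_commutators: "\<one> \<in> commutators G"
  using commutatorsI[OF one_closed one_closed] by simp

lemma inv_in_commutators:
  assumes "c \<in> commutators G"
  shows "inv c \<in> commutators G"
proof -
  obtain a b where ab: "a \<in> carrier G" "b \<in> carrier G" "c = a \<otimes> b \<otimes> inv a \<otimes> inv b"
    using assms by (rule commutatorsE)
  then have "inv c = b \<otimes> a \<otimes> inv b \<otimes> inv a"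
    by (simp add: inv_mult_group m_assoc)
  then show ?thesis using ab commutatorsI by simp
qed

lemma commutator_products_mult:
  assumes "a \<in> commutator_products G k" "b \<in> commutator_products G l"
  shows "a \<otimes> b \<in> commutator_products G (k + l)"
  using assms(1)
proof (induction k arbitrary: a)
  case 0
  have "b \<in> carrier G" using assms(2) commutator_products_subset_carrier by blast
  then show ?case using 0 assms(2) by simp
next
  case (Suc k)
  then obtain c g where a: "a = c \<otimes> g" "c \<in> commutators G" "g \<in> commutator_products G k"
    by auto
  have "c \<in> carrier G" "g \<in> carrier G" "b \<in> carrier G"
    using a(2,3) assms(2) commutator_products_subset_carrier commutators_subset_carrier by blast+
  then have "a \<otimes> b = c \<otimes> (g \<otimes> b)" using a(1) by (simp add: m_assoc)
  then show ?case using commutator_products_SucI[OF a(2) Suc.IH[OF a(3)]] by simp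
qed

lemma one_in_commutator_products: "\<one> \<in> commutator_products G k"
proof (induction k)
  case (Suc k)
  then have "\<one> \<otimes> \<one> \<in> commutator_products G (Suc k)"
    by (rule commutator_products_SucI[OF one_in_commutators])
  then show ?case by simp
qed simp

lemma commutator_products_mono:
  assumes "k \<le> l"
  shows "commutator_products G k \<subseteq> commutator_products G l"
proof
  fix a assume a: "a \<in> commutator_products G k"
  then have "a \<otimes> \<one> \<in> commutator_products G (k + (l - k))"
    by (rule commutator_products_mult[OF _ one_in_commutator_products])
  moreover have "a \<in> carrier G" using a commutator_products_subset_carrier by blast
  ultimately show "a \<in> commutator_products G l"
    using assms by simp
qed

lemma commutators_subset_commutator_products: "commutators G \<subseteq> commutator_products G 1"
proof
  fix c assume c: "c \<in> commutators G"
  have "c \<otimes> \<one> \<in> commutator_products G (Suc 0)"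
    by (rule commutator_products_SucI[OF c one_in_commutator_products])
  moreover have "c \<in> carrier G" using c commutators_subset_carrier by blast
  ultimately show "c \<in> commutator_products G 1"
    by (simp add: One_nat_def)
qed

lemma derived_subset_commutator_products:
  "derived G (carrier G) \<subseteq> (\<Union>k. commutator_products G k)"
proof
  fix x assume "x \<in> derived G (carrier G)"
  then show "x \<in> (\<Union>k. commutator_products G k)"
    unfolding derived_eq_generate_commutators
  proof (induction rule: generate.induct)
    case one
    show ?case using one_in_commutator_products by blast
  next
    case (incl h)
    then show ?case using commutators_subset_commutator_products by blast
  next
    case (inv h)
    then show ?case using inv_in_commutators commutators_subset_commutator_products by blast
  next
    case (eng h1 h2)
    then show ?case using commutator_products_mult by blast
  qed
qed

lemma card_commutator_products_le:
  assumes "finite (carrier G)"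
  shows "card (commutator_products G k) \<le> card (commutators G) ^ k"
proof (induction k)
  case (Suc k)
  have fin: "finite (commutators G)" "finite (commutator_products G k)"
    using assms commutators_subset_carrier commutator_products_subset_carrier finite_subset
    by blast+
  have "commutator_products G (Suc k)
        = (\<lambda>(c, g). c \<otimes> g) ` (commutators G \<times> commutator_products G k)"
    by auto
  then have "card (commutator_products G (Suc k))
        \<le> card (commutators G) * card (commutator_products G k)"
    using card_image_le[of "commutators G \<times> commutator_products G k"] fin
    by (simp add: card_cartesian_product)
  also have "\<dots> \<le> card (commutators G) ^ Suc k"
    using Suc.IH by simp
  finally show ?case .
qed simp

end

lemma commutator_products_product_group:
  assumes groups: "\<And>i. i \<in> I \<Longrightarrow> group (G i)"
    and x: "x \<in> commutator_products (product_group I G) k" and i: "i \<in> I"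
  shows "x i \<in> commutator_products (G i) k"
  using x
proof (induction k arbitrary: x)
  case (Suc k)
  obtain c g where cg: "x = c \<otimes>\<^bsub>product_group I G\<^esub> g"
    "c \<in> commutators (product_group I G)" "g \<in> commutator_products (product_group I G) k"
    using Suc.prems by auto
  obtain a b where ab: "a \<in> carrier (product_group I G)" "b \<in> carrier (product_group I G)"
    "c = a \<otimes>\<^bsub>product_group I G\<^esub> b \<otimes>\<^bsub>product_group I G\<^esub> inv\<^bsub>product_group I G\<^esub> a
        \<otimes>\<^bsub>product_group I G\<^esub> inv\<^bsub>product_group I G\<^esub> b"
    using cg(2) by (rule commutatorsE)
  have "c i = a i \<otimes>\<^bsub>G i\<^esub> b i \<otimes>\<^bsub>G i\<^esub> inv\<^bsub>G i\<^esub> a i \<otimes>\<^bsub>G i\<^esub> inv\<^bsub>G i\<^esub> b i"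
    using ab groups i by simp
  moreover have "a i \<in> carrier (G i)" "b i \<in> carrier (G i)" using ab i by auto
  ultimately have "c i \<in> commutators (G i)" by (simp add: commutatorsI)
  moreover have "x i = c i \<otimes>\<^bsub>G i\<^esub> g i" using cg(1) i by simp
  ultimately show ?case using commutator_products_SucI Suc.IH[OF cg(3)] by metis
qed (use i in simp)

section \<open>Powers in groups of finite exponent\<close>

context group
begin

lemma pow_mod_exponent:
  assumes "g \<in> carrier G" "g [^] (e::nat) = \<one>"
  shows "g [^] (n::nat) = g [^] (n mod e)"
proof -
  have "g [^] n = g [^] (e * (n div e) + n mod e)" by simp
  also have "\<dots> = (g [^] e) [^] (n div e) \<otimes> g [^] (n mod e)"
    using assms(1) by (simp only: nat_pow_mult nat_pow_pow)
  finally show ?thesis using assms by simp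
qed

lemma root_of_coprime_exponent:
  assumes g: "g \<in> carrier G" "g [^] (e::nat) = \<one>" and "coprime K e"
  shows "\<exists>h \<in> carrier G. h [^] K = g"
proof -
  obtain a where a: "[K * a = 1] (mod e)"
    using cong_solve_coprime_nat[OF \<open>coprime K e\<close>] by auto
  have "(g [^] a) [^] K = g [^] (K * a)"
    using g(1) by (simp add: nat_pow_pow mult.commute)
  also have "\<dots> = g [^] ((K * a) mod e)" by (rule pow_mod_exponent[OF g])
  also have "\<dots> = g [^] (1 mod e)" using a by (simp add: cong_def)
  also have "\<dots> = g" using pow_mod_exponent[OF g, of 1, symmetric] g(1) by simp
  finally show ?thesis using g(1) by blast
qed

lemma subgroup_nat_pow_closed: "subgroup H G \<Longrightarrow> x \<in> H \<Longrightarrow> x [^] (n::nat) \<in> H"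
  by (induction n) (simp_all add: subgroup.one_closed subgroup.m_closed)

lemma pow_in_finite_index_subgroup:
  assumes H: "subgroup H G" "finite (rcosets H)" and y: "y \<in> carrier G"
  shows "\<exists>d. 0 < d \<and> d \<le> card (rcosets H) \<and> y [^] d \<in> H"
proof -
  let ?N = "card (rcosets H)"
  let ?coset = "\<lambda>i::nat. H #> y [^] i"
  have into: "?coset ` {..?N} \<subseteq> rcosets H"
    using H(1) y by (intro image_subsetI rcosetsI) (auto simp: subgroup.subset)
  have "\<not> inj_on ?coset {..?N}"
  proof
    assume "inj_on ?coset {..?N}"
    then have "card {..?N} \<le> ?N" by (rule card_inj_on_le[OF _ into H(2)])
    then show False by simp
  qed
  then obtain i j where ij: "i < j" "j \<le> ?N" "?coset i = ?coset j"
  proof -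
    obtain i j where "i \<le> ?N" "j \<le> ?N" "i \<noteq> j" "?coset i = ?coset j"
      using \<open>\<not> inj_on ?coset {..?N}\<close> unfolding inj_on_def by auto
    then show thesis
    proof (cases "i < j")
      case True
      then show thesis by (rule that) fact+
    next
      case False
      then have "j < i" using \<open>i \<noteq> j\<close> by simp
      then show thesis by (rule that) (fact, rule sym, fact)
    qed
  qed
  have "y [^] j \<in> ?coset i"
    using ij(3) rcos_self[OF nat_pow_closed[OF y] H(1)] by simp
  then have "y [^] j \<otimes> inv (y [^] i) \<in> H"
    using subgroup.rcos_module_imp[OF H(1) is_group nat_pow_closed[OF y]] by blast
  moreover have "y [^] j \<otimes> inv (y [^] i) = y [^] (j - i)"
  proof -
    have "y [^] j = y [^] (j - i) \<otimes> y [^] i"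
      using ij(1) y by (simp add: nat_pow_mult)
    then show ?thesis using y by (simp add: m_assoc)
  qed
  ultimately show ?thesis using ij by (intro exI[of _ "j - i"]) simp
qed

lemma fact_pow_in_finite_index_subgroup:
  assumes H: "subgroup H G" "finite (rcosets H)" and y: "y \<in> carrier G"
  shows "y [^] (fact (card (rcosets H)) :: nat) \<in> H"
proof -
  obtain d where d: "0 < d" "d \<le> card (rcosets H)" "y [^] d \<in> H"
    using pow_in_finite_index_subgroup[OF assms] by blast
  then have "d dvd (fact (card (rcosets H)) :: nat)" by (simp add: dvd_fact)
  then obtain c where c: "(fact (card (rcosets H)) :: nat) = d * c" by (rule dvdE)
  have "y [^] (fact (card (rcosets H)) :: nat) = (y [^] d) [^] c"
    unfolding c using y by (simp add: nat_pow_pow)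
  then show ?thesis
    using subgroup_nat_pow_closed[OF H(1) d(3)] by simp
qed

end

section \<open>Heisenberg-type groups over \<open>\<int>/p\<close>\<close>

definition residue_vectors :: "'i set \<Rightarrow> nat \<Rightarrow> ('i \<Rightarrow> int) set" where
  "residue_vectors A p = {x. \<forall>i. x i \<in> {0..<int p} \<and> (i \<notin> A \<longrightarrow> x i = 0)}"

lemma residue_vectorsD:
  assumes "x \<in> residue_vectors A p"
  shows "0 \<le> x i" "x i < int p" "i \<notin> A \<Longrightarrow> x i = 0"
  using assms unfolding residue_vectors_def mem_Collect_eq atLeastLessThan_iff by blast+

lemma card_residue_vectors:
  assumes "finite A" "0 < p"
  shows "card (residue_vectors A p) = p ^ card A"
proof -
  have "bij_betw (\<lambda>x. restrict x A) (residue_vectors A p) (PiE A (\<lambda>_. {0..<int p}))"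
  proof (rule bij_betwI[where g = "\<lambda>y i. if i \<in> A then y i else 0"])
    show "(\<lambda>x. restrict x A) \<in> residue_vectors A p \<rightarrow> PiE A (\<lambda>_. {0..<int p})"
      by (auto simp: residue_vectors_def)
    show "(\<lambda>y i. if i \<in> A then y i else 0) \<in> PiE A (\<lambda>_. {0..<int p}) \<rightarrow> residue_vectors A p"
      using assms(2) by (auto simp: residue_vectors_def PiE_iff)
  qed (auto simp: residue_vectors_def PiE_iff extensional_def fun_eq_iff)
  then have "card (residue_vectors A p) = card (PiE A (\<lambda>_. {0..<int p}))"
    by (rule bij_betw_same_card)
  then show ?thesis using assms by (simp add: card_PiE)
qed

lemma finite_residue_vectors: "finite A \<Longrightarrow> 0 < p \<Longrightarrow> finite (residue_vectors A p)"
  using card_residue_vectors[of A p] by (metis card.infinite nat_zero_less_power_iff zero_less_iff_neq_zero)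

(* An element (x, y, z) of heis p n has x, y in (Z/p)^n and z in (Z/p)^(n*n), stored as integer
   representatives in [0, p) that vanish outside the index range; heis_mult is the group law
   over Z and heis_mod reduces it modulo p. *)
type_synonym heis_elem = "(nat \<Rightarrow> int) \<times> (nat \<Rightarrow> int) \<times> (nat \<times> nat \<Rightarrow> int)"

definition heis_mult :: "heis_elem \<Rightarrow> heis_elem \<Rightarrow> heis_elem" where
  "heis_mult = (\<lambda>(x, y, z) (x', y', z').
     (\<lambda>i. x i + x' i, \<lambda>j. y j + y' j, \<lambda>(i, j). z (i, j) + z' (i, j) + x i * y' j))"

definition heis_inv :: "heis_elem \<Rightarrow> heis_elem" where
  "heis_inv = (\<lambda>(x, y, z). (\<lambda>i. - x i, \<lambda>j. - y j, \<lambda>(i, j). x i * y j - z (i, j)))"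

definition heis_mod :: "nat \<Rightarrow> heis_elem \<Rightarrow> heis_elem" where
  "heis_mod p = (\<lambda>(x, y, z). (\<lambda>i. x i mod p, \<lambda>j. y j mod p, \<lambda>q. z q mod p))"

definition heis :: "nat \<Rightarrow> nat \<Rightarrow> heis_elem monoid" where
  "heis p n = \<lparr>carrier = residue_vectors {..<n} p \<times> residue_vectors {..<n} p
                         \<times> residue_vectors ({..<n} \<times> {..<n}) p,
               mult = \<lambda>a b. heis_mod p (heis_mult a b),
               one = (\<lambda>_. 0, \<lambda>_. 0, \<lambda>_. 0)\<rparr>"

lemma heis_mod_mult_left: "heis_mod p (heis_mult (heis_mod p a) b) = heis_mod p (heis_mult a b)"
  by (cases a; cases b) (simp add: heis_mod_def heis_mult_def fun_eq_iff mod_simps,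
      metis mod_add_left_eq mod_add_right_eq mod_mult_left_eq add.assoc)

lemma heis_mod_mult_right: "heis_mod p (heis_mult a (heis_mod p b)) = heis_mod p (heis_mult a b)"
  by (cases a; cases b) (simp add: heis_mod_def heis_mult_def fun_eq_iff mod_simps,
      metis mod_add_left_eq mod_add_right_eq mod_mult_right_eq add.assoc)

lemma heis_mult_assoc: "heis_mult (heis_mult a b) c = heis_mult a (heis_mult b c)"
  by (cases a; cases b; cases c) (simp add: heis_mult_def fun_eq_iff algebra_simps)

lemma heis_inv_mult: "heis_mult (heis_inv a) a = (\<lambda>_. 0, \<lambda>_. 0, \<lambda>_. 0)"
  by (cases a) (simp add: heis_mult_def heis_inv_def fun_eq_iff)

lemma heis_mod_carrier: "a \<in> carrier (heis p n) \<Longrightarrow> heis_mod p a = a"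
  by (cases a) (auto simp: heis_def heis_mod_def residue_vectors_def fun_eq_iff)

lemma heis_mod_in_carrier:
  assumes "0 < p"
    and "\<forall>i. n \<le> i \<longrightarrow> fst a i = 0 \<and> fst (snd a) i = 0"
    and "\<forall>i j. n \<le> i \<or> n \<le> j \<longrightarrow> snd (snd a) (i, j) = 0"
  shows "heis_mod p a \<in> carrier (heis p n)"
  using assms by (cases a) (auto simp: heis_def heis_mod_def residue_vectors_def)

lemma heis_mult_closed:
  assumes "0 < p" "a \<in> carrier (heis p n)" "b \<in> carrier (heis p n)"
  shows "heis_mod p (heis_mult a b) \<in> carrier (heis p n)"
  using assms by (intro heis_mod_in_carrier)
    (auto simp: heis_def heis_mult_def residue_vectors_def split: prod.splits)

lemma heis_inv_closed:
  assumes "0 < p" "a \<in> carrier (heis p n)"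
  shows "heis_mod p (heis_inv a) \<in> carrier (heis p n)"
  using assms by (intro heis_mod_in_carrier)
    (auto simp: heis_def heis_inv_def residue_vectors_def split: prod.splits)

lemma heis_group:
  assumes p: "0 < p"
  shows "group (heis p n)"
proof (rule groupI)
  show "\<one>\<^bsub>heis p n\<^esub> \<in> carrier (heis p n)" using p by (simp add: heis_def residue_vectors_def)
  fix a assume a: "a \<in> carrier (heis p n)"
  show "\<one>\<^bsub>heis p n\<^esub> \<otimes>\<^bsub>heis p n\<^esub> a = a"
    using heis_mod_carrier[OF a] by (cases a) (simp add: heis_def heis_mult_def)
  show "\<exists>b\<in>carrier (heis p n). b \<otimes>\<^bsub>heis p n\<^esub> a = \<one>\<^bsub>heis p n\<^esub>"
  proof
    show "heis_mod p (heis_inv a) \<in> carrier (heis p n)" using heis_inv_closed[OF p a] .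
    show "heis_mod p (heis_inv a) \<otimes>\<^bsub>heis p n\<^esub> a = \<one>\<^bsub>heis p n\<^esub>"
      by (simp add: heis_def heis_mod_mult_left heis_inv_mult) (simp add: heis_mod_def)
  qed
  fix b assume b: "b \<in> carrier (heis p n)"
  show "a \<otimes>\<^bsub>heis p n\<^esub> b \<in> carrier (heis p n)"
    using heis_mult_closed[OF p a b] by (simp add: heis_def)
  fix c
  show "a \<otimes>\<^bsub>heis p n\<^esub> b \<otimes>\<^bsub>heis p n\<^esub> c = a \<otimes>\<^bsub>heis p n\<^esub> (b \<otimes>\<^bsub>heis p n\<^esub> c)"
    by (simp add: heis_def heis_mod_mult_left heis_mod_mult_right heis_mult_assoc)
qed

lemma heis_inv:
  assumes p: "0 < p" and a: "a \<in> carrier (heis p n)"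
  shows "inv\<^bsub>heis p n\<^esub> a = heis_mod p (heis_inv a)"
proof (rule group.inv_equality[OF heis_group[OF p]])
  show "heis_mod p (heis_inv a) \<otimes>\<^bsub>heis p n\<^esub> a = \<one>\<^bsub>heis p n\<^esub>"
    by (simp add: heis_def heis_mod_mult_left heis_inv_mult) (simp add: heis_mod_def)
qed (use heis_inv_closed[OF p a] a in auto)

lemma heis_commutator:
  assumes p: "0 < p" and a: "a \<in> carrier (heis p n)" and b: "b \<in> carrier (heis p n)"
  shows "a \<otimes>\<^bsub>heis p n\<^esub> b \<otimes>\<^bsub>heis p n\<^esub> inv\<^bsub>heis p n\<^esub> a \<otimes>\<^bsub>heis p n\<^esub> inv\<^bsub>heis p n\<^esub> b
    = heis_mod p (\<lambda>_. 0, \<lambda>_. 0, \<lambda>(i, j). fst a i * fst (snd b) j - fst b i * fst (snd a) j)"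
proof -
  have "heis_mult (heis_mult (heis_mult a b) (heis_inv a)) (heis_inv b)
      = (\<lambda>_. 0, \<lambda>_. 0, \<lambda>(i, j). fst a i * fst (snd b) j - fst b i * fst (snd a) j)"
    by (cases a; cases b) (simp add: heis_mult_def heis_inv_def fun_eq_iff algebra_simps)
  then show ?thesis
    using a b by (simp add: heis_inv p) (simp add: heis_def heis_mod_mult_left heis_mod_mult_right)
qed

lemma card_commutators_heis:
  assumes p: "0 < p"
  shows "card (commutators (heis p n)) \<le> p ^ (4 * n)"
proof -
  let ?V = "residue_vectors {..<n} p"
  let ?comm = "\<lambda>((x, y), (x', y')). heis_mod p (\<lambda>_. 0, \<lambda>_. 0, \<lambda>(i, j). x i * y' j - x' i * y j)"
  have "commutators (heis p n) \<subseteq> ?comm ` ((?V \<times> ?V) \<times> (?V \<times> ?V))"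
  proof (intro subsetI)
    fix c assume "c \<in> commutators (heis p n)"
    then obtain a b where ab: "a \<in> carrier (heis p n)" "b \<in> carrier (heis p n)" and
      c: "c = a \<otimes>\<^bsub>heis p n\<^esub> b \<otimes>\<^bsub>heis p n\<^esub> inv\<^bsub>heis p n\<^esub> a
              \<otimes>\<^bsub>heis p n\<^esub> inv\<^bsub>heis p n\<^esub> b"
      by (rule commutatorsE)
    show "c \<in> ?comm ` ((?V \<times> ?V) \<times> (?V \<times> ?V))"
      unfolding c heis_commutator[OF p ab]
      by (rule image_eqI[where x = "((fst a, fst (snd a)), (fst b, fst (snd b)))"])
        (use ab in \<open>auto simp: heis_def\<close>)
  qed
  moreover have "finite ?V" using p by (simp add: finite_residue_vectors)
  ultimately have "card (commutators (heis p n))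
      \<le> card ((?V \<times> ?V) \<times> (?V \<times> ?V))"
    by (meson card_image_le card_mono finite_SigmaI finite_imageI order_trans)
  also have "\<dots> = p ^ (n + n + (n + n))"
    using p by (simp add: card_cartesian_product card_residue_vectors power_add)
  also have "\<dots> = p ^ (4 * n)"
    by (rule arg_cong[of _ _ "power p"]) simp
  finally show ?thesis .
qed

lemma heis_mult_components:
  "fst (a \<otimes>\<^bsub>heis p n\<^esub> b) = (\<lambda>i. (fst a i + fst b i) mod p)"
  "fst (snd (a \<otimes>\<^bsub>heis p n\<^esub> b)) = (\<lambda>j. (fst (snd a) j + fst (snd b) j) mod p)"
  "snd (snd (a \<otimes>\<^bsub>heis p n\<^esub> b))
     = (\<lambda>(i, j). (snd (snd a) (i, j) + snd (snd b) (i, j) + fst a i * fst (snd b) j) mod p)"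
  by (simp_all add: heis_def heis_mod_def heis_mult_def split_def)

lemma heis_row_in_commutators:
  assumes p: "0 < p" and z: "z \<in> residue_vectors ({..<n} \<times> {..<n}) p" and "k < n"
  shows "(\<lambda>_. 0, \<lambda>_. 0, \<lambda>(i, j). if i = k then z (i, j) else 0) \<in> commutators (heis p n)"
proof -
  note z_range = residue_vectorsD(1,2)[OF z]
  have z_outside: "z (i, j) = 0" if "n \<le> i \<or> n \<le> j" for i j
    using residue_vectorsD(3)[OF z, of "(i, j)"] that by auto
  (* 1 mod p rather than 1, so that a is in the carrier also when p = 1 *)
  define a :: heis_elem where "a = (\<lambda>i. if i = k then 1 mod int p else 0, \<lambda>_. 0, \<lambda>_. 0)"
  define b :: heis_elem where "b = (\<lambda>_. 0, \<lambda>j. z (k, j), \<lambda>_. 0)"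
  have ab: "a \<in> carrier (heis p n)" "b \<in> carrier (heis p n)"
    using \<open>k < n\<close> p z_range z_outside by (simp_all add: a_def b_def heis_def residue_vectors_def)
  have "heis_mod p (\<lambda>_. 0, \<lambda>_. 0, \<lambda>(i, j). fst a i * fst (snd b) j - fst b i * fst (snd a) j)
      = (\<lambda>_. 0, \<lambda>_. 0, \<lambda>(i, j). if i = k then z (i, j) else 0)"
    using z_range by (simp add: heis_mod_def a_def b_def fun_eq_iff mod_simps)
  then show ?thesis
    using heis_commutator[OF p ab] commutatorsI[OF ab] by simp
qed

lemma heis_central_in_derived:
  assumes p: "0 < p" and z: "z \<in> residue_vectors ({..<n} \<times> {..<n}) p"
  shows "(\<lambda>_. 0, \<lambda>_. 0, z) \<in> derived (heis p n) (carrier (heis p n))"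
proof -
  interpret G: group "heis p n" using heis_group[OF p] .
  have D: "subgroup (derived (heis p n) (carrier (heis p n))) (heis p n)"
    by (rule G.derived_is_subgroup[OF order_refl])
  define rows where "rows k = (\<lambda>(i, j). if i < k then z (i, j) else 0)" for k
  define row where "row k = (\<lambda>(i, j). if i = k then z (i, j) else 0)" for k
  have row: "(\<lambda>_. 0, \<lambda>_. 0, row k) \<in> derived (heis p n) (carrier (heis p n))" if "k < n" for k
    using heis_row_in_commutators[OF p z that] unfolding row_def G.derived_eq_generate_commutators
    by (rule generate.incl)
  have "(\<lambda>_. 0, \<lambda>_. 0, rows k) \<in> derived (heis p n) (carrier (heis p n))" if "k \<le> n" for k
    using that
  proof (induction k)
    case 0
    then show ?case
      using subgroup.one_closed[OF D] by (simp add: heis_def rows_def case_prod_beta')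
  next
    case (Suc k)
    have "(\<lambda>_. 0, \<lambda>_. 0, rows k) \<otimes>\<^bsub>heis p n\<^esub> (\<lambda>_. 0, \<lambda>_. 0, row k)
        = (\<lambda>_. 0, \<lambda>_. 0, rows (Suc k))"
      using residue_vectorsD(1,2)[OF z]
      by (simp add: prod_eq_iff heis_mult_components rows_def row_def fun_eq_iff)
    then show ?case
      using subgroup.m_closed[OF D] Suc row by (metis Suc_le_lessD less_imp_le_nat)
  qed
  moreover have "rows n = z"
    using residue_vectorsD(3)[OF z] by (auto simp: rows_def fun_eq_iff)
  ultimately show ?thesis by blast
qed

lemma heis_pow_linear_part:
  "fst (a [^]\<^bsub>heis p n\<^esub> k) = (\<lambda>i. int k * fst a i mod p)
   \<and> fst (snd (a [^]\<^bsub>heis p n\<^esub> k)) = (\<lambda>j. int k * fst (snd a) j mod p)"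
proof (induction k)
  case (Suc k)
  have "int (Suc k) * x = int k * x + x" for x :: int by (simp add: algebra_simps)
  then show ?case using Suc by (simp add: heis_mult_components mod_add_left_eq)
qed (simp add: heis_def)

lemma heis_pow_central:
  "(\<lambda>_. 0, \<lambda>_. 0, z) [^]\<^bsub>heis p n\<^esub> k = (\<lambda>_. 0, \<lambda>_. 0, \<lambda>q. int k * z q mod p)"
proof (induction k)
  case (Suc k)
  have "int (Suc k) * x = int k * x + x" for x :: int by (simp add: algebra_simps)
  then show ?case using Suc
    by (simp add: prod_eq_iff heis_mult_components mod_add_left_eq case_prod_beta')
qed (simp add: heis_def)

lemma heis_exponent:
  assumes p: "0 < p" and a: "a \<in> carrier (heis p n)"
  shows "a [^]\<^bsub>heis p n\<^esub> (p * p) = \<one>\<^bsub>heis p n\<^esub>"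
proof -
  interpret G: group "heis p n" using heis_group[OF p] .
  obtain z where az: "a [^]\<^bsub>heis p n\<^esub> p = (\<lambda>_. 0, \<lambda>_. 0, z)"
    using heis_pow_linear_part[of p n a p]
    by (cases "a [^]\<^bsub>heis p n\<^esub> p") (auto simp: fun_eq_iff)
  have "(\<lambda>_. 0, \<lambda>_. 0, z) \<in> carrier (heis p n)"
    using a by (metis G.nat_pow_closed az)
  then have "(a [^]\<^bsub>heis p n\<^esub> p) [^]\<^bsub>heis p n\<^esub> p = \<one>\<^bsub>heis p n\<^esub>"
    unfolding az by (subst heis_pow_central) (simp_all add: heis_def)
  then show ?thesis using a by (simp add: G.nat_pow_pow)
qed

lemma finite_carrier_heis: "0 < p \<Longrightarrow> finite (carrier (heis p n))"
  by (simp add: heis_def finite_residue_vectors)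

lemma heis_derived_not_commutator_product:
  assumes p: "2 \<le> p" and k: "4 * k < n"
  shows "\<exists>g \<in> derived (heis p n) (carrier (heis p n)). g \<notin> commutator_products (heis p n) k"
proof (rule ccontr)
  assume no_witness: "\<not> ?thesis"
  have p0: "0 < p" using p by simp
  interpret G: group "heis p n" using heis_group[OF p0] .
  let ?Z = "residue_vectors ({..<n} \<times> {..<n}) p"
  let ?central = "\<lambda>z. ((\<lambda>_. 0, \<lambda>_. 0, z) :: heis_elem)"
  have "?central ` ?Z \<subseteq> commutator_products (heis p n) k"
    using no_witness heis_central_in_derived[OF p0] by blast
  moreover have "finite (commutator_products (heis p n) k)"
    using G.commutator_products_subset_carrier finite_carrier_heis[OF p0] finite_subset by blast
  ultimately have "card (?central ` ?Z) \<le> card (commutator_products (heis p n) k)"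
    by (rule card_mono[rotated])
  moreover have "card (?central ` ?Z) = p ^ (n * n)"
    using p0 by (subst card_image) (auto simp: inj_on_def card_residue_vectors)
  moreover have "card (commutator_products (heis p n) k) \<le> p ^ (4 * n * k)"
  proof -
    have "card (commutator_products (heis p n) k)
        \<le> card (commutators (heis p n)) ^ k"
      by (rule G.card_commutator_products_le[OF finite_carrier_heis[OF p0]])
    also have "\<dots> \<le> (p ^ (4 * n)) ^ k"
      by (rule power_mono[OF card_commutators_heis[OF p0]]) simp
    finally show ?thesis by (simp add: power_mult)
  qed
  moreover have "p ^ (4 * n * k) < p ^ (n * n)"
    using p k by (intro power_strict_increasing) auto
  ultimately show False by linarith
qed

section \<open>Products of finite discrete groups\<close>

lemma nat_pow_product_group:
  "i \<in> I \<Longrightarrow> (x [^]\<^bsub>product_group I G\<^esub> (k::nat)) i = x i [^]\<^bsub>G i\<^esub> k"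
  by (induction k) auto

definition discrete_product_topology :: "('i \<Rightarrow> ('a, 'b) monoid_scheme) \<Rightarrow> ('i \<Rightarrow> 'a) topology" where
  "discrete_product_topology G = product_topology (\<lambda>i. discrete_topology (carrier (G i))) UNIV"

lemma topspace_discrete_product_topology [simp]:
  "topspace (discrete_product_topology G) = carrier (product_group UNIV G)"
  by (simp add: discrete_product_topology_def)

lemma continuous_map_discrete_product_topology_iff:
  "continuous_map T (discrete_product_topology G) f
    \<longleftrightarrow> (\<forall>i. continuous_map T (discrete_topology (carrier (G i))) (\<lambda>x. f x i))"
  by (simp add: discrete_product_topology_def continuous_map_componentwise_UNIV)

lemma continuous_map_discrete_product_projection:
  "continuous_map (discrete_product_topology G) (discrete_topology (carrier (G i))) (\<lambda>x. x i)"
  unfolding discrete_product_topology_def by (rule continuous_map_product_projection) simp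

lemma topological_group_discrete_product:
  assumes groups: "\<And>i. group (G i)"
  shows "topological_group (product_group UNIV G) (discrete_product_topology G)"
  unfolding topological_group_def
proof (intro conjI)
  let ?P = "product_group UNIV G" and ?T = "discrete_product_topology G"
  show "group ?P" using groups by simp
  show "topspace ?T = carrier ?P" by simp
  show "continuous_map (prod_topology ?T ?T) ?T (\<lambda>(x, y). x \<otimes>\<^bsub>?P\<^esub> y)"
    unfolding continuous_map_discrete_product_topology_iff
  proof
    fix i
    have "continuous_map (prod_topology ?T ?T) (discrete_topology (carrier (G i) \<times> carrier (G i)))
        (\<lambda>(x, y). (x i, y i))"
      unfolding prod_topology_discrete_topology continuous_map_prod_top
      by (simp add: continuous_map_discrete_product_projection)
    moreover have "continuous_map (discrete_topology (carrier (G i) \<times> carrier (G i)))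
        (discrete_topology (carrier (G i))) (\<lambda>(a, b). a \<otimes>\<^bsub>G i\<^esub> b)"
      using group.subgroup_self[OF groups] subgroup.m_closed by fastforce
    ultimately have "continuous_map (prod_topology ?T ?T) (discrete_topology (carrier (G i)))
        ((\<lambda>(a, b). a \<otimes>\<^bsub>G i\<^esub> b) \<circ> (\<lambda>(x, y). (x i, y i)))"
      by (rule continuous_map_compose)
    then show "continuous_map (prod_topology ?T ?T) (discrete_topology (carrier (G i)))
        (\<lambda>z. ((\<lambda>(x, y). x \<otimes>\<^bsub>?P\<^esub> y) z) i)"
      by (simp add: o_def case_prod_beta')
  qed
  show "continuous_map ?T ?T (\<lambda>x. inv\<^bsub>?P\<^esub> x)"
  proof (rule continuous_map_eq)
    show "continuous_map ?T ?T (\<lambda>x i. inv\<^bsub>G i\<^esub> x i)"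
      unfolding continuous_map_discrete_product_topology_iff
    proof
      fix i
      have "continuous_map (discrete_topology (carrier (G i))) (discrete_topology (carrier (G i)))
          (\<lambda>a. inv\<^bsub>G i\<^esub> a)"
        using group.inv_closed[OF groups] by simp
      from continuous_map_compose[OF continuous_map_discrete_product_projection[of G i] this]
      show "continuous_map ?T (discrete_topology (carrier (G i))) (\<lambda>x. inv\<^bsub>G i\<^esub> x i)"
        by (simp add: o_def)
    qed
    show "(\<lambda>i. inv\<^bsub>G i\<^esub> x i) = inv\<^bsub>?P\<^esub> x" if "x \<in> topspace ?T" for x
      using that groups by (simp add: restrict_UNIV)
  qed
qed

lemma totally_disconnected_discrete_product:
  "totally_disconnected_space (discrete_product_topology G)"
  unfolding totally_disconnected_space_def
proof (intro allI impI)
  fix S assume S: "S \<subseteq> topspace (discrete_product_topology G) \<and> connectedin (discrete_product_topology G) S"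
  have "x i = y i" if "x \<in> S" "y \<in> S" for x y i
  proof -
    have "connectedin (discrete_topology (carrier (G i))) ((\<lambda>x. x i) ` S)"
      using S by (intro connectedin_continuous_map_image[OF continuous_map_discrete_product_projection]) auto
    then show ?thesis using that unfolding connectedin_discrete_topology by blast
  qed
  then show "\<exists>a. S \<subseteq> {a}" by blast
qed

lemma profinite_group_discrete_product:
  assumes "\<And>i. group (G i)" and "\<And>i. finite (carrier (G i))"
  shows "profinite_group (product_group UNIV G) (discrete_product_topology G)"
  using assms topological_group_discrete_product[of G] totally_disconnected_discrete_product[of G]
  unfolding profinite_group_def
  by (simp add: discrete_product_topology_def compact_space_product_topology
      compact_space_discrete_topology Hausdorff_space_product_topology)

lemma openin_discrete_product_cylinder:
  assumes "finite F" and h: "\<And>i. h i \<in> carrier (G i)"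
  shows "openin (discrete_product_topology G) (PiE UNIV (\<lambda>i. if i \<in> F then {h i} else carrier (G i)))"
  unfolding discrete_product_topology_def openin_PiE_gen
proof (intro disjI2 conjI ballI)
  show "finite {i \<in> UNIV. (if i \<in> F then {h i} else carrier (G i))
                            \<noteq> topspace (discrete_topology (carrier (G i)))}"
    by (rule finite_subset[OF _ \<open>finite F\<close>]) auto
qed (simp add: h)

lemma openin_discrete_product_subgroup:
  assumes groups: "\<And>i. group (G i)" and H: "subgroup H (product_group UNIV G)" and "finite F"
    and kernel: "\<And>x. x \<in> carrier (product_group UNIV G) \<Longrightarrow> (\<forall>i\<in>F. x i = \<one>\<^bsub>G i\<^esub>) \<Longrightarrow> x \<in> H"
  shows "openin (discrete_product_topology G) H"
proof -
  let ?P = "product_group UNIV G"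
  interpret P: group ?P using groups by simp
  have "\<exists>U. openin (discrete_product_topology G) U \<and> h \<in> U \<and> U \<subseteq> H" if h: "h \<in> H" for h
  proof -
    have hP: "h \<in> carrier ?P" using h subgroup.subset[OF H] by blast
    then have hi: "h i \<in> carrier (G i)" for i by (simp add: PiE_iff)
    define U where "U = PiE UNIV (\<lambda>i. if i \<in> F then {h i} else carrier (G i))"
    have "U \<subseteq> H"
    proof
      fix x assume x: "x \<in> U"
      have x_i: "x i \<in> (if i \<in> F then {h i} else carrier (G i))" for i
        using x unfolding U_def by (rule PiE_mem) simp
      have "x i \<in> carrier (G i)" for i
        using x_i[of i] hi[of i] by (cases "i \<in> F") simp_all
      then have xP: "x \<in> carrier ?P" by (simp add: PiE_iff)
      define y where "y = inv\<^bsub>?P\<^esub> h \<otimes>\<^bsub>?P\<^esub> x"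
      have yP: "y \<in> carrier ?P" unfolding y_def using hP xP by (intro P.m_closed P.inv_closed)
      have "y i = \<one>\<^bsub>G i\<^esub>" if "i \<in> F" for i
      proof -
        have "x i = h i" using x_i[of i] that by simp
        then show ?thesis
          using hP hi[of i] groups by (simp add: y_def group.l_inv)
      qed
      then have "y \<in> H" using kernel[OF yP] by blast
      then have "h \<otimes>\<^bsub>?P\<^esub> y \<in> H" by (rule subgroup.m_closed[OF H h])
      moreover have "h \<otimes>\<^bsub>?P\<^esub> y = x"
      proof -
        have "h \<otimes>\<^bsub>?P\<^esub> y = h \<otimes>\<^bsub>?P\<^esub> inv\<^bsub>?P\<^esub> h \<otimes>\<^bsub>?P\<^esub> x"
          unfolding y_def by (rule P.m_assoc[OF hP P.inv_closed[OF hP] xP, symmetric])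
        then show ?thesis by (simp only: P.r_inv[OF hP] P.l_one[OF xP])
      qed
      ultimately show "x \<in> H" by simp
    qed
    moreover have "h \<in> U" by (simp add: U_def PiE_iff hi)
    moreover have "openin (discrete_product_topology G) U"
      unfolding U_def by (rule openin_discrete_product_cylinder[OF \<open>finite F\<close> hi])
    ultimately show ?thesis by blast
  qed
  then show ?thesis by (subst openin_subopen) blast
qed

lemma pow_onto_discrete_product:
  fixes G :: "'i \<Rightarrow> ('a, 'b) monoid_scheme" and e :: "'i \<Rightarrow> nat"
  assumes groups: "\<And>i. group (G i)"
    and exponent: "\<And>i g. g \<in> carrier (G i) \<Longrightarrow> g [^]\<^bsub>G i\<^esub> e i = \<one>\<^bsub>G i\<^esub>"
    and x: "x \<in> carrier (product_group UNIV G)"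
    and trivial: "\<forall>i. \<not> coprime K (e i) \<longrightarrow> x i = \<one>\<^bsub>G i\<^esub>"
  shows "\<exists>y \<in> carrier (product_group UNIV G). y [^]\<^bsub>product_group UNIV G\<^esub> K = x"
proof -
  have "\<forall>i. \<exists>y. y \<in> carrier (G i) \<and> y [^]\<^bsub>G i\<^esub> K = x i"
  proof
    fix i
    have xi: "x i \<in> carrier (G i)" using x by (simp add: PiE_iff)
    show "\<exists>y. y \<in> carrier (G i) \<and> y [^]\<^bsub>G i\<^esub> K = x i"
    proof (cases "coprime K (e i)")
      case True
      then show ?thesis
        using group.root_of_coprime_exponent[OF groups xi exponent[OF xi]] by blast
    next
      case False
      then show ?thesis
        using trivial monoid.nat_pow_one[OF group.is_monoid[OF groups]]
          monoid.one_closed[OF group.is_monoid[OF groups]]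
        by (intro exI[of _ "\<one>\<^bsub>G i\<^esub>"]) simp
    qed
  qed
  from choice[OF this] obtain y where y: "\<forall>i. y i \<in> carrier (G i) \<and> y i [^]\<^bsub>G i\<^esub> K = x i"
    by blast
  then show ?thesis by (intro bexI[of _ y]) (simp_all add: nat_pow_product_group fun_eq_iff PiE_iff)
qed

lemma strongly_complete_discrete_product:
  fixes G :: "'i \<Rightarrow> ('a, 'b) monoid_scheme" and e :: "'i \<Rightarrow> nat"
  assumes groups: "\<And>i. group (G i)"
    and exponent: "\<And>i g. g \<in> carrier (G i) \<Longrightarrow> g [^]\<^bsub>G i\<^esub> e i = \<one>\<^bsub>G i\<^esub>"
    and finite_noncoprime: "\<And>K. 0 < K \<Longrightarrow> finite {i. \<not> coprime K (e i)}"
  shows "strongly_complete (product_group UNIV G) (discrete_product_topology G)"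
  unfolding strongly_complete_def
proof (intro allI impI)
  let ?P = "product_group UNIV G"
  interpret P: group ?P using groups by simp
  fix H assume H: "subgroup H ?P \<and> finite (rcosets\<^bsub>?P\<^esub> H)"
  define K where "K = (fact (card (rcosets\<^bsub>?P\<^esub> H)) :: nat)"
  show "openin (discrete_product_topology G) H"
  proof (rule openin_discrete_product_subgroup[OF groups conjunct1[OF H]])
    show "finite {i. \<not> coprime K (e i)}" unfolding K_def by (rule finite_noncoprime) simp
    fix x assume x: "x \<in> carrier ?P" and "\<forall>i \<in> {i. \<not> coprime K (e i)}. x i = \<one>\<^bsub>G i\<^esub>"
    then have "\<forall>i. \<not> coprime K (e i) \<longrightarrow> x i = \<one>\<^bsub>G i\<^esub>" by blast
    from pow_onto_discrete_product[OF groups exponent x this]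
    obtain y where "y \<in> carrier ?P" "y [^]\<^bsub>?P\<^esub> K = x" by blast
    moreover have "y [^]\<^bsub>?P\<^esub> K \<in> H"
      unfolding K_def using H \<open>y \<in> carrier ?P\<close> by (intro P.fact_pow_in_finite_index_subgroup) auto
    ultimately show "x \<in> H" by simp
  qed
qed

lemma single_in_derived_product_group:
  assumes groups: "\<And>i. group (G i)" and x: "x \<in> derived (G a) (carrier (G a))"
  shows "(\<lambda>i. if i = a then x else \<one>\<^bsub>G i\<^esub>) \<in> derived (product_group UNIV G) (carrier (product_group UNIV G))"
proof -
  let ?P = "product_group UNIV G"
  define single where "single y = (\<lambda>i. if i = a then y else \<one>\<^bsub>G i\<^esub>)" for y
  have "single \<in> hom (G a) ?P"
  proof (rule homI)
    fix y assume "y \<in> carrier (G a)"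
    then show "single y \<in> carrier ?P"
      by (simp add: single_def PiE_iff monoid.one_closed[OF group.is_monoid[OF groups]])
  next
    fix y z assume "y \<in> carrier (G a)" "z \<in> carrier (G a)"
    then show "single (y \<otimes>\<^bsub>G a\<^esub> z) = single y \<otimes>\<^bsub>?P\<^esub> single z"
      using monoid.l_one[OF group.is_monoid[OF groups]] monoid.one_closed[OF group.is_monoid[OF groups]]
      by (simp add: single_def fun_eq_iff)
  qed
  then interpret h: group_hom "G a" ?P single
    using groups by (simp add: group_hom_def group_hom_axioms_def)
  have "single x \<in> single ` derived (G a) (carrier (G a))" using x by (rule imageI)
  also have "\<dots> = derived ?P (single ` carrier (G a))"
    by (rule h.derived_img[OF order_refl, symmetric])
  also have "\<dots> \<subseteq> derived ?P (carrier ?P)"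
    by (rule h.H.mono_derived) (use h.hom_closed in blast)
  finally show ?thesis by (simp add: single_def)
qed

lemma finite_support_in_derived_product_group:
  assumes groups: "\<And>i. group (G i)" and g: "\<And>i. g i \<in> derived (G i) (carrier (G i))"
    and "finite F"
  shows "(\<lambda>i. if i \<in> F then g i else \<one>\<^bsub>G i\<^esub>) \<in> derived (product_group UNIV G) (carrier (product_group UNIV G))"
  using \<open>finite F\<close>
proof (induction F rule: finite_induct)
  let ?P = "product_group UNIV G"
  interpret P: group ?P using groups by simp
  have D: "subgroup (derived ?P (carrier ?P)) ?P" by (rule P.derived_is_subgroup[OF order_refl])
  case empty
  show ?case using subgroup.one_closed[OF D] by (simp add: restrict_UNIV)
  case (insert a F)
  have "g i \<in> carrier (G i)" for i
    using g group.derived_in_carrier[OF groups order_refl] by blast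
  then have "(\<lambda>i. if i \<in> insert a F then g i else \<one>\<^bsub>G i\<^esub>)
      = (\<lambda>i. if i \<in> F then g i else \<one>\<^bsub>G i\<^esub>) \<otimes>\<^bsub>?P\<^esub> (\<lambda>i. if i = a then g a else \<one>\<^bsub>G i\<^esub>)"
    using insert(2) monoid.l_one[OF group.is_monoid[OF groups]] monoid.r_one[OF group.is_monoid[OF groups]]
      monoid.one_closed[OF group.is_monoid[OF groups]]
    by (simp add: fun_eq_iff)
  then show ?case
    using subgroup.m_closed[OF D insert(3) single_in_derived_product_group[OF groups g]] by simp
qed

lemma not_in_derived_product_group:
  assumes groups: "\<And>i. group (G i)"
    and unbounded: "\<And>k. \<exists>i. g i \<notin> commutator_products (G i) k"
  shows "g \<notin> derived (product_group UNIV G) (carrier (product_group UNIV G))"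
proof
  interpret P: group "product_group UNIV G" using groups by simp
  assume "g \<in> derived (product_group UNIV G) (carrier (product_group UNIV G))"
  then obtain k where k: "g \<in> commutator_products (product_group UNIV G) k"
    using P.derived_subset_commutator_products by blast
  obtain i where "g i \<notin> commutator_products (G i) k" using unbounded by blast
  moreover have "g i \<in> commutator_products (G i) k"
    by (rule commutator_products_product_group[OF _ k]) (simp_all add: groups)
  ultimately show False by contradiction
qed

lemma not_closedin_derived_discrete_product:
  assumes groups: "\<And>i. group (G i)" and g: "\<And>i. g i \<in> derived (G i) (carrier (G i))"
    and unbounded: "\<And>k. \<exists>i. g i \<notin> commutator_products (G i) k"
  shows "\<not> closedin (discrete_product_topology G) (derived (product_group UNIV G) (carrier (product_group UNIV G)))"
proof
  let ?P = "product_group UNIV G"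
  let ?O = "carrier ?P - derived ?P (carrier ?P)"
  assume "closedin (discrete_product_topology G) (derived ?P (carrier ?P))"
  then have "openin (discrete_product_topology G) ?O"
    by (simp add: closedin_def)
  moreover have "g \<in> ?O"
  proof
    have "g i \<in> carrier (G i)" for i
      using g[of i] group.derived_in_carrier[OF groups order_refl] by blast
    then show "g \<in> carrier ?P" by (simp add: PiE_iff)
    show "g \<notin> derived ?P (carrier ?P)" by (rule not_in_derived_product_group[OF groups unbounded])
  qed
  ultimately have "\<exists>U. finite {i \<in> UNIV. U i \<noteq> topspace (discrete_topology (carrier (G i)))}
      \<and> (\<forall>i\<in>UNIV. openin (discrete_topology (carrier (G i))) (U i))
      \<and> g \<in> PiE UNIV U \<and> PiE UNIV U \<subseteq> ?O"
    unfolding discrete_product_topology_def openin_product_topology_alt by (rule bspec)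
  then obtain U where
    U: "finite {i \<in> UNIV. U i \<noteq> topspace (discrete_topology (carrier (G i)))}"
      "g \<in> PiE UNIV U" "PiE UNIV U \<subseteq> ?O"
    by blast
  let ?F = "{i \<in> UNIV. U i \<noteq> topspace (discrete_topology (carrier (G i)))}"
  have "(if i \<in> ?F then g i else \<one>\<^bsub>G i\<^esub>) \<in> U i" for i
    using PiE_mem[OF U(2), of i] monoid.one_closed[OF group.is_monoid[OF groups]] by simp
  then have "(\<lambda>i. if i \<in> ?F then g i else \<one>\<^bsub>G i\<^esub>) \<in> PiE UNIV U"
    by (simp add: PiE_iff)
  moreover have "(\<lambda>i. if i \<in> ?F then g i else \<one>\<^bsub>G i\<^esub>) \<in> derived ?P (carrier ?P)"
    using finite_support_in_derived_product_group[OF groups g U(1)] .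
  ultimately show False using U(3) by blast
qed

(* Non-prime indices contribute the trivial group heis 1 m. *)
definition family_modulus :: "nat \<Rightarrow> nat" where
  "family_modulus m = (if Factorial_Ring.prime m then m else 1)"

definition heis_family :: "nat \<Rightarrow> heis_elem monoid" where
  "heis_family m = heis (family_modulus m) m"

lemma family_modulus_pos: "0 < family_modulus m"
  by (simp add: family_modulus_def prime_gt_0_nat)

lemma heis_family_group: "group (heis_family m)"
  by (simp add: heis_family_def heis_group family_modulus_pos)

lemma profinite_group_heis_product:
  "profinite_group (product_group UNIV heis_family) (discrete_product_topology heis_family)"
  by (rule profinite_group_discrete_product)
    (simp_all add: heis_family_def heis_group finite_carrier_heis family_modulus_pos)

lemma strongly_complete_heis_product:
  "strongly_complete (product_group UNIV heis_family) (discrete_product_topology heis_family)"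
proof (rule strongly_complete_discrete_product[where e = "\<lambda>m. family_modulus m * family_modulus m"])
  show "group (heis_family m)" for m by (rule heis_family_group)
  show "g [^]\<^bsub>heis_family m\<^esub> (family_modulus m * family_modulus m) = \<one>\<^bsub>heis_family m\<^esub>"
    if "g \<in> carrier (heis_family m)" for m g
    using that heis_exponent[OF family_modulus_pos] by (simp add: heis_family_def)
  show "finite {m. \<not> coprime K (family_modulus m * family_modulus m)}" if "0 < K" for K
  proof (rule finite_subset)
    show "{m. \<not> coprime K (family_modulus m * family_modulus m)} \<subseteq> {..K}"
    proof
      fix m assume "m \<in> {m. \<not> coprime K (family_modulus m * family_modulus m)}"
      then have "Factorial_Ring.prime m" "\<not> coprime K m"
        by (auto simp: family_modulus_def split: if_splits)
      then have "m dvd K" by (metis coprime_commute prime_imp_coprime)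
      then show "m \<in> {..K}" using \<open>0 < K\<close> by (simp add: dvd_imp_le)
    qed
  qed simp
qed

lemma not_closedin_derived_heis_product:
  "\<not> closedin (discrete_product_topology heis_family)
     (derived (product_group UNIV heis_family) (carrier (product_group UNIV heis_family)))"
proof -
  have "\<forall>m. \<exists>g. g \<in> derived (heis_family m) (carrier (heis_family m))
      \<and> (Factorial_Ring.prime m \<longrightarrow> g \<notin> commutator_products (heis_family m) ((m - 1) div 4))"
  proof
    fix m
    show "\<exists>g. g \<in> derived (heis_family m) (carrier (heis_family m))
      \<and> (Factorial_Ring.prime m \<longrightarrow> g \<notin> commutator_products (heis_family m) ((m - 1) div 4))"
    proof (cases "Factorial_Ring.prime m")
      case True
      then have "2 \<le> m" "4 * ((m - 1) div 4) < m" using prime_ge_2_nat[OF True] by auto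
      then show ?thesis
        using heis_derived_not_commutator_product[of m "(m - 1) div 4" m] True
        by (auto simp: heis_family_def family_modulus_def)
    next
      case False
      then show ?thesis
        using subgroup.one_closed[OF group.derived_is_subgroup[OF heis_family_group order_refl]] by blast
    qed
  qed
  from choice[OF this] obtain g where g:
    "\<And>m. g m \<in> derived (heis_family m) (carrier (heis_family m))"
    "\<And>m. Factorial_Ring.prime m \<Longrightarrow> g m \<notin> commutator_products (heis_family m) ((m - 1) div 4)"
    by blast
  have "\<exists>m. g m \<notin> commutator_products (heis_family m) k" for k
  proof -
    obtain m where m: "Factorial_Ring.prime m" "4 * k + 1 < m" using bigger_prime by blast
    then have "k \<le> (m - 1) div 4" by presburger
    then have "commutator_products (heis_family m) k
        \<subseteq> commutator_products (heis_family m) ((m - 1) div 4)"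
      by (rule group.commutator_products_mono[OF heis_family_group])
    then show ?thesis using g(2)[OF m(1)] by blast
  qed
  then show ?thesis by (rule not_closedin_derived_discrete_product[OF heis_family_group g(1)])
qed

section \<open>Transport along an injection\<close>

(* The statement fixes the carrier type nat set set, so the example is moved along an
   injection of its carrier into that type. *)

definition image_group :: "('a \<Rightarrow> 'c) \<Rightarrow> ('a, 'b) monoid_scheme \<Rightarrow> 'c monoid" where
  "image_group f G = \<lparr>carrier = f ` carrier G,
     mult = \<lambda>x y. f (inv_into (carrier G) f x \<otimes>\<^bsub>G\<^esub> inv_into (carrier G) f y),
     one = f \<one>\<^bsub>G\<^esub>\<rparr>"

lemma (in group) image_group_iso:
  assumes "inj_on f (carrier G)"
  shows "group (image_group f G)" and "f \<in> iso G (image_group f G)"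
proof -
  have hom: "f \<in> hom G (image_group f G)"
    using assms by (intro homI) (simp_all add: image_group_def)
  then have "group ((image_group f G)\<lparr>carrier := f ` carrier G, one := f \<one>\<rparr>)"
    by (rule hom_imp_img_group)
  then show "group (image_group f G)" by (simp add: image_group_def)
  show "f \<in> iso G (image_group f G)"
    using hom assms by (simp add: iso_def bij_betw_def image_group_def)
qed

definition image_topology :: "('a \<Rightarrow> 'c) \<Rightarrow> 'a topology \<Rightarrow> 'c topology" where
  "image_topology f T = pullback_topology (f ` topspace T) (inv_into (topspace T) f) T"

lemma homeomorphic_maps_image_topology:
  assumes "inj_on f (topspace T)"
  shows "homeomorphic_maps T (image_topology f T) f (inv_into (topspace T) f)"
proof -
  let ?g = "inv_into (topspace T) f"
  have topspace: "topspace (image_topology f T) = f ` topspace T"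
    by (auto simp: image_topology_def topspace_pullback_topology inv_into_into)
  have "continuous_map (image_topology f T) T (id \<circ> ?g)"
    unfolding image_topology_def by (rule continuous_map_pullback[OF continuous_map_id])
  moreover have "continuous_map T (image_topology f T) f"
    unfolding image_topology_def
  proof (rule continuous_map_pullback')
    show "continuous_map T T (?g \<circ> f)"
      by (rule continuous_map_eq[OF continuous_map_id]) (simp add: assms)
  qed auto
  ultimately show ?thesis
    unfolding homeomorphic_maps_def topspace using assms by (simp add: f_inv_into_f)
qed

lemma totally_disconnected_space_homeomorphic_map:
  assumes hom: "homeomorphic_map T' T \<phi>" and "totally_disconnected_space T"
  shows "totally_disconnected_space T'"
  unfolding totally_disconnected_space_def
proof (intro allI impI)
  fix S assume S: "S \<subseteq> topspace T' \<and> connectedin T' S"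
  then have "\<phi> ` S \<subseteq> topspace T \<and> connectedin T (\<phi> ` S)"
    using homeomorphic_map_connectedness[OF hom] homeomorphic_imp_surjective_map[OF hom] by blast
  then obtain a where a: "\<phi> ` S \<subseteq> {a}"
    using assms(2) unfolding totally_disconnected_space_def by blast
  have "s = t" if "s \<in> S" "t \<in> S" for s t
  proof -
    have "\<phi> s = \<phi> t" using that a by blast
    then show ?thesis
      using that S homeomorphic_imp_injective_map[OF hom] unfolding inj_on_def by blast
  qed
  then show "\<exists>a. S \<subseteq> {a}" by blast
qed

lemma topological_group_iso:
  assumes G: "topological_group G T" and H: "group H" and iso: "\<phi> \<in> iso H G"
    and hom: "homeomorphic_map T' T \<phi>" and topspace: "topspace T' = carrier H"
  shows "topological_group H T'"
proof -
  have "group G" using G by (simp add: topological_group_def)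
  then interpret \<phi>: group_hom H G \<phi>
    using H iso by (simp add: group_hom_def group_hom_axioms_def iso_def)
  obtain \<psi> where \<psi>: "homeomorphic_maps T' T \<phi> \<psi>"
    using hom homeomorphic_map_maps by blast
  have \<psi>\<phi>: "\<psi> (\<phi> x) = x" if "x \<in> carrier H" for x
    using \<psi> that topspace by (simp add: homeomorphic_maps_def)
  have c\<phi>: "continuous_map T' T \<phi>" and c\<psi>: "continuous_map T T' \<psi>"
    using \<psi> by (simp_all add: homeomorphic_maps_def)
  show ?thesis
    unfolding topological_group_def
  proof (intro conjI)
    show "continuous_map (prod_topology T' T') T' (\<lambda>(x, y). x \<otimes>\<^bsub>H\<^esub> y)"
    proof (rule continuous_map_eq)
      have "continuous_map (prod_topology T' T') (prod_topology T T) (\<lambda>(x, y). (\<phi> x, \<phi> y))"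
        using c\<phi> by (simp add: continuous_map_prod_top)
      then show "continuous_map (prod_topology T' T') T'
          (\<psi> \<circ> (\<lambda>(x, y). x \<otimes>\<^bsub>G\<^esub> y) \<circ> (\<lambda>(x, y). (\<phi> x, \<phi> y)))"
        using G c\<psi> unfolding topological_group_def by (auto intro: continuous_map_compose)
      show "(\<psi> \<circ> (\<lambda>(x, y). x \<otimes>\<^bsub>G\<^esub> y) \<circ> (\<lambda>(x, y). (\<phi> x, \<phi> y))) z = (\<lambda>(x, y). x \<otimes>\<^bsub>H\<^esub> y) z"
        if "z \<in> topspace (prod_topology T' T')" for z
        using that topspace \<psi>\<phi> by (auto simp flip: \<phi>.hom_mult)
    qed
    show "continuous_map T' T' (\<lambda>x. inv\<^bsub>H\<^esub> x)"
    proof (rule continuous_map_eq)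
      show "continuous_map T' T' (\<psi> \<circ> (\<lambda>x. inv\<^bsub>G\<^esub> x) \<circ> \<phi>)"
        using G c\<phi> c\<psi> unfolding topological_group_def by (auto intro: continuous_map_compose)
      show "(\<psi> \<circ> (\<lambda>x. inv\<^bsub>G\<^esub> x) \<circ> \<phi>) x = inv\<^bsub>H\<^esub> x" if "x \<in> topspace T'" for x
        using that topspace \<psi>\<phi> by (simp flip: \<phi>.hom_inv)
    qed
  qed (use H topspace in simp_all)
qed

lemma strongly_complete_iso:
  assumes G: "group G" "strongly_complete G T" and H: "group H" and iso: "\<phi> \<in> iso H G"
    and hom: "homeomorphic_map T' T \<phi>" and topspace: "topspace T' = carrier H"
  shows "strongly_complete H T'"
  unfolding strongly_complete_def
proof (intro allI impI)
  interpret \<phi>: group_hom H G \<phi>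
    using G H iso by (simp add: group_hom_def group_hom_axioms_def iso_def)
  have surj: "\<phi> ` carrier H = carrier G" using iso by (simp add: iso_def bij_betw_def)
  fix K assume K: "subgroup K H \<and> finite (rcosets\<^bsub>H\<^esub> K)"
  have K_sub: "K \<subseteq> carrier H" using K subgroup.subset by blast
  have "rcosets\<^bsub>G\<^esub> (\<phi> ` K) \<subseteq> (\<lambda>C. \<phi> ` C) ` (rcosets\<^bsub>H\<^esub> K)"
  proof
    fix C assume "C \<in> rcosets\<^bsub>G\<^esub> (\<phi> ` K)"
    then obtain y where y: "y \<in> carrier G" "C = \<phi> ` K #>\<^bsub>G\<^esub> y"
      by (auto simp: RCOSETS_def)
    obtain x where x: "x \<in> carrier H" "y = \<phi> x"
      using y(1) unfolding surj[symmetric] by (rule imageE)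
    have "\<phi> ` (K #>\<^bsub>H\<^esub> x) = \<phi> ` K #>\<^bsub>G\<^esub> \<phi> x"
      using x(1) K_sub by (force simp: r_coset_def)
    moreover have "K #>\<^bsub>H\<^esub> x \<in> rcosets\<^bsub>H\<^esub> K"
      using x(1) by (auto simp: RCOSETS_def)
    ultimately show "C \<in> (\<lambda>C. \<phi> ` C) ` (rcosets\<^bsub>H\<^esub> K)" using x(2) y(2) by blast
  qed
  then have "finite (rcosets\<^bsub>G\<^esub> (\<phi> ` K))" using K finite_surj by blast
  moreover have "subgroup (\<phi> ` K) G" using K \<phi>.subgroup_img_is_subgroup by blast
  ultimately have "openin T (\<phi> ` K)" using G(2) unfolding strongly_complete_def by blast
  then show "openin T' K"
    using homeomorphic_map_openness[OF hom] K_sub topspace by blast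
qed

lemma closedin_derived_iso:
  assumes G: "group G" and H: "group H" and iso: "\<phi> \<in> iso H G"
    and hom: "homeomorphic_map T' T \<phi>" and topspace: "topspace T' = carrier H"
  shows "closedin T' (derived H (carrier H)) \<longleftrightarrow> closedin T (derived G (carrier G))"
proof -
  interpret \<phi>: group_hom H G \<phi>
    using G H iso by (simp add: group_hom_def group_hom_axioms_def iso_def)
  have "\<phi> ` carrier H = carrier G" using iso by (simp add: iso_def bij_betw_def)
  then have "\<phi> ` derived H (carrier H) = derived G (carrier G)"
    using \<phi>.derived_img[OF order_refl] by simp
  then show ?thesis
    using homeomorphic_map_closedness[OF hom, of "derived H (carrier H)"]
      \<phi>.G.derived_in_carrier[OF order_refl] topspace
    by simp
qed

lemma profinite_group_iso:
  assumes G: "profinite_group G T" and H: "group H" and iso: "\<phi> \<in> iso H G"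
    and hom: "homeomorphic_map T' T \<phi>" and topspace: "topspace T' = carrier H"
  shows "profinite_group H T'"
proof -
  have T: "topological_group G T" "compact_space T" "Hausdorff_space T"
    "totally_disconnected_space T"
    using G by (simp_all add: profinite_group_def)
  have homeo: "T' homeomorphic_space T" by (rule homeomorphic_map_imp_homeomorphic_space[OF hom])
  have "topological_group H T'" by (rule topological_group_iso[OF T(1) H iso hom topspace])
  moreover have "compact_space T'" using T(2) homeomorphic_compact_space[OF homeo] by simp
  moreover have "Hausdorff_space T'" using T(3) homeomorphic_Hausdorff_space[OF homeo] by simp
  moreover have "totally_disconnected_space T'"
    by (rule totally_disconnected_space_homeomorphic_map[OF hom T(4)])
  ultimately show ?thesis by (simp add: profinite_group_def)
qed

lemma profinite_counterexample_transfer: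
  fixes f :: "'a \<Rightarrow> 'c" and G :: "('a, 'b) monoid_scheme"
  assumes inj: "inj_on f (carrier G)"
    and P: "profinite_group G T" "strongly_complete G T" "\<not> closedin T (derived G (carrier G))"
  shows "\<exists>(H :: 'c monoid) T'. profinite_group H T' \<and> strongly_complete H T'
           \<and> \<not> closedin T' (derived H (carrier H))"
proof (intro exI conjI)
  have G: "group G" and topspace: "topspace T = carrier G"
    using P(1) by (simp_all add: profinite_group_def topological_group_def)
  interpret group G by (rule G)
  let ?\<phi> = "inv_into (carrier G) f"
  have H: "group (image_group f G)" and iso: "?\<phi> \<in> iso (image_group f G) G"
    using image_group_iso[OF inj] iso_set_sym by blast+
  have maps: "homeomorphic_maps T (image_topology f T) f ?\<phi>"
    using homeomorphic_maps_image_topology[of f T] inj topspace by simp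
  then have hom: "homeomorphic_map (image_topology f T) T ?\<phi>"
    using homeomorphic_maps_imp_map homeomorphic_maps_sym by blast
  have topspace': "topspace (image_topology f T) = carrier (image_group f G)"
    using homeomorphic_imp_surjective_map[OF homeomorphic_maps_imp_map[OF maps]] topspace
    by (simp add: image_group_def)
  show "profinite_group (image_group f G) (image_topology f T)"
    by (rule profinite_group_iso[OF P(1) H iso hom topspace'])
  show "strongly_complete (image_group f G) (image_topology f T)"
    by (rule strongly_complete_iso[OF G P(2) H iso hom topspace'])
  show "\<not> closedin (image_topology f T) (derived (image_group f G) (carrier (image_group f G)))"
    using P(3) closedin_derived_iso[OF G H iso hom topspace'] by simp
qed

definition graph_code :: "('a::countable \<Rightarrow> 'b::countable) \<Rightarrow> nat set" where
  "graph_code h = to_nat ` range (\<lambda>x. (x, h x))"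

lemma inj_graph_code: "inj graph_code"
proof
  fix h h' :: "'a \<Rightarrow> 'b" assume "graph_code h = graph_code h'"
  then have graphs: "range (\<lambda>x. (x, h x)) = range (\<lambda>x. (x, h' x))"
    by (simp add: graph_code_def inj_image_eq_iff)
  show "h = h'"
  proof
    fix x
    have "(x, h x) \<in> range (\<lambda>x. (x, h' x))" using graphs by blast
    then show "h x = h' x" by auto
  qed
qed

definition heis_family_code :: "(nat \<Rightarrow> heis_elem) \<Rightarrow> nat set set" where
  "heis_family_code g = {graph_code (\<lambda>(m, t, i, j).
     if t = (0::nat) then fst (g m) i else if t = 1 then fst (snd (g m)) i else snd (snd (g m)) (i, j))}"

lemma inj_heis_family_code: "inj heis_family_code"
proof
  fix g g' assume "heis_family_code g = heis_family_code g'"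
  then have flat: "(\<lambda>(m, t, i, j). if t = (0::nat) then fst (g m) i
                      else if t = 1 then fst (snd (g m)) i else snd (snd (g m)) (i, j))
      = (\<lambda>(m, t, i, j). if t = (0::nat) then fst (g' m) i
                      else if t = 1 then fst (snd (g' m)) i else snd (snd (g' m)) (i, j))"
    using injD[OF inj_graph_code] by (simp add: heis_family_code_def)
  show "g = g'"
  proof
    fix m
    have "fst (g m) i = fst (g' m) i" for i using fun_cong[OF flat, of "(m, 0, i, 0)"] by simp
    moreover have "fst (snd (g m)) j = fst (snd (g' m)) j" for j
      using fun_cong[OF flat, of "(m, 1, j, 0)"] by simp
    moreover have "snd (snd (g m)) (i, j) = snd (snd (g' m)) (i, j)" for i j
      using fun_cong[OF flat, of "(m, 2, i, j)"] by simp
    ultimately show "g m = g' m" by (simp add: prod_eq_iff fun_eq_iff)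
  qed
qed

theorem proposition1:
  shows "\<exists>(Q :: nat set set monoid) (T :: nat set set topology).
           profinite_group Q T \<and> strongly_complete Q T \<and>
           \<not> closedin T (derived Q (carrier Q))"
proof -
  have "inj_on heis_family_code (carrier (product_group UNIV heis_family))"
    using inj_heis_family_code by (rule inj_on_subset) simp
  from profinite_counterexample_transfer[OF this profinite_group_heis_product
      strongly_complete_heis_product not_closedin_derived_heis_product]
  show ?thesis .
qed

end
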